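(* Let $\mathcal{A}=(Q,A,\delta,q_0,F)$ be a semi-flower automaton. Then for every letter $b\in A$, $\mathcal{A}$ is a one-cluster automaton with respect to $b$; that is, the sub-digraph of the state digraph of $\mathcal{A}$ consisting of all states and all $b$-edges has exactly one $b$-cluster.
   Context: An automaton over a finite alphabet $A$ is a quintuple $\mathcal{A}=(Q,A,\delta,q_0,F)$ with $Q$ a non-empty finite set of states, initial state $q_0\in Q$, set of final states $F\subseteq Q$, and total transition function $\delta:Q\times A\to Q$. Its digraph $D(\mathcal{A})$ has vertex set $Q$ and, for each $p\in Q$, $a\in A$, an edge labeled $a$ (an $a$-edge) from $p$ to $\delta(p,a)$. A path is an alternating sequence $v_0,e_1,v_1,\dots,e_k,v_k$ of distinct vertices and edges with $e_i$ going from $v_{i-1}$ to $v_i$; a cycle is a path with at least one edge whose initial and terminal vertices coincide. A state $q$ is accessible if there is a path from $q_0$ to $q$, and co-accessible if there is a path from $q$ to a final state. $\mathcal{A}$ is a semi-flower automaton (SFA) if $F=\{q_0\}$, every state is accessible and co-accessible, and every cycle in $D(\mathcal{A})$ passes through $q_0$. For $b\in A$, let $\mathcal{R}$ be the sub-digraph of $D(\mathcal{A})$ formed by the $b$-edges; a $b$-cluster is a connected component of (the underlying graph of) $\mathcal{R}$. An automaton is a one-cluster automaton with respect to $b$ if it has exactly one $b$-cluster. *)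

theory Defs
  imports Main
begin

definition automaton :: "'q set \<Rightarrow> 'a set \<Rightarrow> ('q \<Rightarrow> 'a \<Rightarrow> 'q) \<Rightarrow> 'q \<Rightarrow> 'q set \<Rightarrow> bool" where
  "automaton Q A \<delta> q0 F \<longleftrightarrow> finite Q \<and> Q \<noteq> {} \<and> finite A \<and> q0 \<in> Q \<and> F \<subseteq> Q \<and>
     (\<forall>p\<in>Q. \<forall>a\<in>A. \<delta> p a \<in> Q)"

text \<open>In the digraph D(A) there is exactly one a-edge out of each state p, going to delta p a;
  we identify this edge with the pair (p, a).  A path v0 e1 v1 ... ek vk is given by the
  vertex list vs = [v0,...,vk] and the label list as = [a1,...,ak], edge ei = (v(i-1), ai).\<close>
definition walk :: "'q set \<Rightarrow> 'a set \<Rightarrow> ('q \<Rightarrow> 'a \<Rightarrow> 'q) \<Rightarrow> 'q list \<Rightarrow> 'a list \<Rightarrow> bool" where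
  "walk Q A \<delta> vs as \<longleftrightarrow> vs \<noteq> [] \<and> length vs = Suc (length as) \<and> set vs \<subseteq> Q \<and> set as \<subseteq> A \<and>
     (\<forall>i<length as. \<delta> (vs ! i) (as ! i) = vs ! Suc i)"

definition is_path :: "'q set \<Rightarrow> 'a set \<Rightarrow> ('q \<Rightarrow> 'a \<Rightarrow> 'q) \<Rightarrow> 'q list \<Rightarrow> 'a list \<Rightarrow> bool" where
  "is_path Q A \<delta> vs as \<longleftrightarrow> walk Q A \<delta> vs as \<and> distinct vs \<and> distinct (zip (butlast vs) as)"

definition is_cycle :: "'q set \<Rightarrow> 'a set \<Rightarrow> ('q \<Rightarrow> 'a \<Rightarrow> 'q) \<Rightarrow> 'q list \<Rightarrow> 'a list \<Rightarrow> bool" where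
  "is_cycle Q A \<delta> vs as \<longleftrightarrow> walk Q A \<delta> vs as \<and> as \<noteq> [] \<and> last vs = hd vs \<and>
     distinct (butlast vs) \<and> distinct (zip (butlast vs) as)"

definition accessible :: "'q set \<Rightarrow> 'a set \<Rightarrow> ('q \<Rightarrow> 'a \<Rightarrow> 'q) \<Rightarrow> 'q \<Rightarrow> 'q \<Rightarrow> bool" where
  "accessible Q A \<delta> q0 q \<longleftrightarrow> (\<exists>vs as. is_path Q A \<delta> vs as \<and> hd vs = q0 \<and> last vs = q)"

definition coaccessible :: "'q set \<Rightarrow> 'a set \<Rightarrow> ('q \<Rightarrow> 'a \<Rightarrow> 'q) \<Rightarrow> 'q set \<Rightarrow> 'q \<Rightarrow> bool" where
  "coaccessible Q A \<delta> F q \<longleftrightarrow> (\<exists>vs as. is_path Q A \<delta> vs as \<and> hd vs = q \<and> last vs \<in> F)"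

definition semi_flower :: "'q set \<Rightarrow> 'a set \<Rightarrow> ('q \<Rightarrow> 'a \<Rightarrow> 'q) \<Rightarrow> 'q \<Rightarrow> 'q set \<Rightarrow> bool" where
  "semi_flower Q A \<delta> q0 F \<longleftrightarrow> automaton Q A \<delta> q0 F \<and> F = {q0} \<and>
     (\<forall>q\<in>Q. accessible Q A \<delta> q0 q \<and> coaccessible Q A \<delta> F q) \<and>
     (\<forall>vs as. is_cycle Q A \<delta> vs as \<longrightarrow> q0 \<in> set vs)"

definition b_adj :: "'q set \<Rightarrow> ('q \<Rightarrow> 'a \<Rightarrow> 'q) \<Rightarrow> 'a \<Rightarrow> ('q \<times> 'q) set" where
  "b_adj Q \<delta> b = {(p, \<delta> p b) | p. p \<in> Q} \<union> {(\<delta> p b, p) | p. p \<in> Q}"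

definition b_cluster_of :: "'q set \<Rightarrow> ('q \<Rightarrow> 'a \<Rightarrow> 'q) \<Rightarrow> 'a \<Rightarrow> 'q \<Rightarrow> 'q set" where
  "b_cluster_of Q \<delta> b p = {q \<in> Q. (p, q) \<in> (b_adj Q \<delta> b)\<^sup>*}"

definition b_clusters :: "'q set \<Rightarrow> ('q \<Rightarrow> 'a \<Rightarrow> 'q) \<Rightarrow> 'a \<Rightarrow> 'q set set" where
  "b_clusters Q \<delta> b = b_cluster_of Q \<delta> b ` Q"

definition one_cluster :: "'q set \<Rightarrow> ('q \<Rightarrow> 'a \<Rightarrow> 'q) \<Rightarrow> 'a \<Rightarrow> bool" where
  "one_cluster Q \<delta> b \<longleftrightarrow> card (b_clusters Q \<delta> b) = 1"

end

theory Submission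
  imports Defs
begin

text \<open>Iterating the letter b from any state p must eventually revisit a state, since Q is
  finite; the stretch between the first repetition and its earlier occurrence is a cycle of
  b-edges. In a semi-flower automaton every cycle passes through q0, so q0 lies on the
  b-orbit of p and hence in the b-cluster of p. Thus all states share the cluster of q0.\<close>

lemma first_repetition:
  fixes g :: "nat \<Rightarrow> 'a"
  assumes "finite (range g)"
  shows "\<exists>i j. i < j \<and> g i = g j \<and> inj_on g {..<j}"
proof -
  let ?rep = "\<lambda>j. \<exists>i<j. g i = g j"
  have "\<not> inj g"
    using assms finite_imageD by blast
  then obtain x y where "x \<noteq> y" "g x = g y"
    unfolding inj_def by blast
  then have ex: "?rep (max x y)"
    by (cases x y rule: linorder_cases) (auto simp: max_def)
  define j where "j = (LEAST j. ?rep j)"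
  obtain i where "i < j" "g i = g j"
    using LeastI_ex[of ?rep] ex unfolding j_def by blast
  moreover have "inj_on g {..<j}"
  proof (rule inj_onI)
    fix x y assume "x \<in> {..<j}" "y \<in> {..<j}" "g x = g y"
    show "x = y"
    proof (rule ccontr)
      assume "x \<noteq> y"
      then consider "x < y" | "y < x" by linarith
      then have "\<exists>k<j. ?rep k"
        using \<open>x \<in> {..<j}\<close> \<open>y \<in> {..<j}\<close> \<open>g x = g y\<close> by cases (metis lessThan_iff)+
      then show False
        using not_less_Least unfolding j_def by blast
    qed
  qed
  ultimately show ?thesis by blast
qed

lemma funpow_letter_closed:
  assumes "p \<in> Q" "\<forall>x\<in>Q. \<delta> x b \<in> Q"
  shows "((\<lambda>x. \<delta> x b) ^^ n) p \<in> Q"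
  using assms by (induction n) auto

lemma b_adj_rtrancl_funpow_letter:
  assumes "p \<in> Q" "\<forall>x\<in>Q. \<delta> x b \<in> Q"
  shows "(p, ((\<lambda>x. \<delta> x b) ^^ n) p) \<in> (b_adj Q \<delta> b)\<^sup>*"
proof (induction n)
  case (Suc n)
  let ?y = "((\<lambda>x. \<delta> x b) ^^ n) p"
  have "(?y, \<delta> ?y b) \<in> b_adj Q \<delta> b"
    using funpow_letter_closed[of _ _ \<delta> b, OF assms] unfolding b_adj_def by blast
  with Suc show ?case
    by (simp add: rtrancl_into_rtrancl)
qed simp

lemma is_cycle_letter_orbit:
  fixes g :: "nat \<Rightarrow> 'q"
  assumes "\<And>n. g n \<in> Q" "\<And>n. \<delta> (g n) b = g (Suc n)" "b \<in> A"
    and "i < j" "g i = g j" "inj_on g {..<j}"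
  shows "is_cycle Q A \<delta> (map g [i..<j] @ [g i]) (replicate (j - i) b)"
  unfolding is_cycle_def walk_def
proof (intro conjI allI impI)
  let ?vs = "map g [i..<j] @ [g i]" and ?as = "replicate (j - i) b"
  have "distinct (map g [i..<j])"
    using assms(6) by (simp add: distinct_map inj_on_subset[of g "{..<j}"] subset_eq)
  then show "distinct (butlast ?vs)" "distinct (zip (butlast ?vs) ?as)"
    by (simp_all add: distinct_zipI1)
  show "?vs \<noteq> []" "length ?vs = Suc (length ?as)" "?as \<noteq> []"
    using assms(4) by simp_all
  show "last ?vs = hd ?vs"
    using assms(4) by (simp add: upt_conv_Cons)
  show "set ?vs \<subseteq> Q" "set ?as \<subseteq> A"
    using assms(1,3) by auto
  fix k assume "k < length ?as"
  then have k: "k < j - i" by simp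
  have "?vs ! Suc k = g (Suc (i + k))"
  proof (cases "Suc k < j - i")
    case True
    then show ?thesis by (simp add: nth_append)
  next
    case False
    then have "Suc (i + k) = j" using k by simp
    then show ?thesis using False k assms(5) by (simp add: nth_append)
  qed
  moreover have "?vs ! k = g (i + k)" "?as ! k = b"
    using k by (simp_all add: nth_append)
  ultimately show "\<delta> (?vs ! k) (?as ! k) = ?vs ! Suc k"
    using assms(2) by simp
qed

lemma semi_flower_b_adj_rtrancl_initial:
  assumes "semi_flower Q A \<delta> q0 F" "b \<in> A" "p \<in> Q"
  shows "(p, q0) \<in> (b_adj Q \<delta> b)\<^sup>*"
proof -
  define g where "g n = ((\<lambda>x. \<delta> x b) ^^ n) p" for n
  have closed: "\<forall>x\<in>Q. \<delta> x b \<in> Q" and "finite Q"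
    using assms(1,2) unfolding semi_flower_def automaton_def by auto
  have g_in_Q: "\<forall>n. g n \<in> Q" and g_reach: "\<And>n. (p, g n) \<in> (b_adj Q \<delta> b)\<^sup>*"
    using funpow_letter_closed[of _ _ \<delta> b, OF assms(3) closed]
      b_adj_rtrancl_funpow_letter[of _ _ \<delta> b, OF assms(3) closed]
    unfolding g_def by auto
  have "finite (range g)"
    using \<open>finite Q\<close> g_in_Q by (blast intro: finite_subset)
  then obtain i j where "i < j" "g i = g j" "inj_on g {..<j}"
    using first_repetition by blast
  then have "is_cycle Q A \<delta> (map g [i..<j] @ [g i]) (replicate (j - i) b)"
    using is_cycle_letter_orbit[of g Q \<delta> b A] g_in_Q assms(2) by (simp add: g_def)
  then have "q0 \<in> set (map g [i..<j] @ [g i])"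
    using assms(1) unfolding semi_flower_def by blast
  then show ?thesis
    using g_reach by auto
qed

lemma one_clusterI:
  assumes "q0 \<in> Q" "\<And>p. p \<in> Q \<Longrightarrow> (p, q0) \<in> (b_adj Q \<delta> b)\<^sup>*"
  shows "one_cluster Q \<delta> b"
proof -
  have "sym (b_adj Q \<delta> b)"
    unfolding b_adj_def sym_def by blast
  then have "(q0, p) \<in> (b_adj Q \<delta> b)\<^sup>*" if "p \<in> Q" for p
    using assms(2)[OF that] by (simp add: sym_rtrancl[THEN symD])
  then have "b_cluster_of Q \<delta> b p = b_cluster_of Q \<delta> b q0" if "p \<in> Q" for p
    using assms(2)[OF that] that unfolding b_cluster_of_def by (auto intro: rtrancl_trans)
  then have "b_clusters Q \<delta> b = {b_cluster_of Q \<delta> b q0}"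
    using assms(1) unfolding b_clusters_def by blast
  then show ?thesis
    unfolding one_cluster_def by simp
qed

theorem mainTheorem1:
  fixes Q :: "'q set" and A :: "'a set" and \<delta> :: "'q \<Rightarrow> 'a \<Rightarrow> 'q" and q0 :: 'q and F :: "'q set"
  assumes "semi_flower Q A \<delta> q0 F"
    and "b \<in> A"
  shows "one_cluster Q \<delta> b"
proof (rule one_clusterI)
  show "q0 \<in> Q"
    using assms(1) unfolding semi_flower_def automaton_def by blast
  show "(p, q0) \<in> (b_adj Q \<delta> b)\<^sup>*" if "p \<in> Q" for p
    using semi_flower_b_adj_rtrancl_initial[OF assms that] .
qed

end
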